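(* Let $K\in\{\mathbb R,\mathbb C,\mathbb H\}$ and let $(E,d)$ be a metric vector space over $K$ such that $d$ is $C_0$-translation invariant and $(C_1,C_2,C_3)$-lipschitz multiplicative. Let $d_0(x,y)=\int_{\mathbb U}d(ux,uy)\,d\mu(u)$, $\delta_0(x,y)=\lim_{n\to\infty}\frac1n d_0(nx,ny)$, and $E_0=\{x\in E:\delta_0(x,0)=0\}$ (the maximal linear subspace of $E$ on which $d$ is bounded). For a class $\bar x=x+E_0\in E/E_0$ set $\|\bar x\|=\delta_0(x,0)$. Then this is independent of the representative $x$ of $\bar x$, and $\|\cdot\|:E/E_0\to\mathbb R_+$ is a norm.
   Context: A metric vector space is a topological vector space over $K$ whose topology is generated by the metric $d$. $\mathbb U=\{u\in K:|u|=1\}$, $\mu$ the right-invariant Haar probability measure on $\mathbb U$. $d$ is $C_0$-translation invariant if $d(x+z,y+z)\le d(x,y)+C_0$ for all $x,y,z$. $(C_1,C_2,C_3)$-lipschitz multiplicative ($C_1\ge1$, $C_2,C_3\ge0$) means $C_1^{-1}|\lambda|d(x,y)-C_2|\lambda|-C_3\le d(\lambda x,\lambda y)\le C_1|\lambda|d(x,y)+C_2|\lambda|+C_3$ for all $\lambda\in K$, $x,y\in E$. (Under these hypotheses the limit defining $\delta_0$ exists.) *)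

theory Defs
  imports "HOL-Analysis.Analysis" "HOL-Probability.Probability"
begin

text \<open>The scalar field K is modelled by a type of class real_normed_div_algebra and
  euclidean_space (by Frobenius these are exactly R, C, H up to isomorphism).\<close>

definition K_vector_space :: "('k::real_normed_div_algebra \<Rightarrow> 'e::ab_group_add \<Rightarrow> 'e) \<Rightarrow> bool" where
  "K_vector_space sm \<longleftrightarrow>
     (\<forall>a x y. sm a (x + y) = sm a x + sm a y) \<and>
     (\<forall>a b x. sm (a + b) x = sm a x + sm b x) \<and>
     (\<forall>a b x. sm a (sm b x) = sm (a * b) x) \<and>
     (\<forall>x. sm 1 x = x)"

definition metric_vector_space ::
  "('k::{real_normed_div_algebra,euclidean_space} \<Rightarrow> 'e::ab_group_add \<Rightarrow> 'e) \<Rightarrow> ('e \<Rightarrow> 'e \<Rightarrow> real) \<Rightarrow> bool" where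
  "metric_vector_space sm d \<longleftrightarrow>
     K_vector_space sm \<and> Metric_space UNIV d \<and>
     continuous_map (prod_topology (Metric_space.mtopology UNIV d) (Metric_space.mtopology UNIV d))
        (Metric_space.mtopology UNIV d) (\<lambda>(x, y). x + y) \<and>
     continuous_map (prod_topology euclidean (Metric_space.mtopology UNIV d))
        (Metric_space.mtopology UNIV d) (\<lambda>(a, x). sm a x)"

definition translation_invariant :: "real \<Rightarrow> ('e::ab_group_add \<Rightarrow> 'e \<Rightarrow> real) \<Rightarrow> bool" where
  "translation_invariant C0 d \<longleftrightarrow> (\<forall>x y z. d (x + z) (y + z) \<le> d x y + C0)"

definition lipschitz_multiplicative ::
  "real \<Rightarrow> real \<Rightarrow> real \<Rightarrow> ('k::real_normed_div_algebra \<Rightarrow> 'e \<Rightarrow> 'e) \<Rightarrow> ('e \<Rightarrow> 'e \<Rightarrow> real) \<Rightarrow> bool" where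
  "lipschitz_multiplicative C1 C2 C3 sm d \<longleftrightarrow> C1 \<ge> 1 \<and> C2 \<ge> 0 \<and> C3 \<ge> 0 \<and>
     (\<forall>c x y. norm c * d x y / C1 - C2 * norm c - C3 \<le> d (sm c x) (sm c y) \<and>
              d (sm c x) (sm c y) \<le> C1 * norm c * d x y + C2 * norm c + C3)"

definition unitK :: "'k::real_normed_div_algebra set" where
  "unitK = {u. norm u = 1}"

definition right_haar_prob :: "'k::{real_normed_div_algebra,euclidean_space} measure \<Rightarrow> bool" where
  "right_haar_prob \<mu> \<longleftrightarrow> prob_space \<mu> \<and> sets \<mu> = sets (restrict_space borel unitK) \<and>
     (\<forall>A\<in>sets \<mu>. \<forall>v\<in>unitK. measure \<mu> ((\<lambda>u. u * v) ` A) = measure \<mu> A)"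

definition d0 :: "'k::{real_normed_div_algebra,euclidean_space} measure \<Rightarrow> ('k \<Rightarrow> 'e \<Rightarrow> 'e) \<Rightarrow> ('e \<Rightarrow> 'e \<Rightarrow> real) \<Rightarrow> 'e \<Rightarrow> 'e \<Rightarrow> real" where
  "d0 \<mu> sm d x y = (\<integral>u. d (sm u x) (sm u y) \<partial>\<mu>)"

definition delta0 :: "'k::{real_normed_div_algebra,euclidean_space} measure \<Rightarrow> ('k \<Rightarrow> 'e \<Rightarrow> 'e) \<Rightarrow> ('e \<Rightarrow> 'e \<Rightarrow> real) \<Rightarrow> 'e \<Rightarrow> 'e \<Rightarrow> real" where
  "delta0 \<mu> sm d x y = lim (\<lambda>n. d0 \<mu> sm d (sm (of_nat n) x) (sm (of_nat n) y) / real n)"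

definition E0 :: "'k::{real_normed_div_algebra,euclidean_space} measure \<Rightarrow> ('k \<Rightarrow> 'e::zero \<Rightarrow> 'e) \<Rightarrow> ('e \<Rightarrow> 'e \<Rightarrow> real) \<Rightarrow> 'e set" where
  "E0 \<mu> sm d = {x. delta0 \<mu> sm d x 0 = 0}"

end

theory Submission
  imports Defs
begin

text \<open>The averaged distance to the origin N0 x = d0(x, 0) is subadditive up to the constant C0,
  and invariant under unit scalars because \<mu> is right invariant. Hence n \<mapsto> N0 (n x) + C0 is
  subadditive and Fekete's lemma yields the limit N x = \<delta>0(x, 0). Errors bounded independently
  of n vanish after division by n, so N is exactly subadditive, and it is absolutely homogeneous:
  writing a = u r with |u| = 1 and r > 0, the scalar n a lies within distance 1 of u \<lfloor>r n\<rfloor>,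
  and u is averaged away.\<close>

lemma subadditive_mult_add_le:
  fixes g :: "nat \<Rightarrow> real"
  assumes subadd: "\<And>m n. g (m + n) \<le> g m + g n"
  shows "g (q * k + r) \<le> real q * g k + g r"
proof (induction q)
  case (Suc q)
  have "g (Suc q * k + r) = g (k + (q * k + r))" by (simp add: algebra_simps)
  also have "\<dots> \<le> g k + g (q * k + r)" by (rule subadd)
  also have "\<dots> \<le> g k + (real q * g k + g r)" using Suc by simp
  finally show ?case by (simp add: algebra_simps)
qed simp

lemma fekete_subadditive:
  fixes g :: "nat \<Rightarrow> real"
  assumes subadd: "\<And>m n. g (m + n) \<le> g m + g n" and nonneg: "\<And>n. g n \<ge> 0"
  shows "(\<lambda>n. g n / real n) \<longlonglongrightarrow> (INF n\<in>{1..}. g n / real n)"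
    (is "_ \<longlonglongrightarrow> ?L")
proof -
  have bdd: "bdd_below ((\<lambda>n. g n / real n) ` {1..})"
    by (rule bdd_belowI2[of _ 0]) (simp add: nonneg)
  show ?thesis
  proof (rule order_tendstoI)
    fix a assume "a < ?L"
    show "\<forall>\<^sub>F n in sequentially. a < g n / real n"
      using eventually_ge_at_top[of 1]
      by (rule eventually_mono) (rule less_le_trans[OF \<open>a < ?L\<close> cINF_lower[OF bdd]], simp)
  next
    fix a assume "?L < a"
    then obtain k where k: "k \<ge> 1" "g k / real k < a"
      using cINF_less_iff[OF _ bdd, of a] by force
    define M where "M = Max (g ` {..<k})"
    have M: "g r \<le> M" if "r < k" for r
      unfolding M_def using that by auto
    have "\<forall>\<^sub>F n in sequentially. M / real n < a - g k / real k"
      using order_tendstoD(2)[OF lim_const_over_n[of M]] k(2) by simp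
    then show "\<forall>\<^sub>F n in sequentially. g n / real n < a"
      using eventually_ge_at_top[of 1]
    proof eventually_elim
      case (elim n)
      define q where "q = n div k"
      have qk: "real q * real k \<le> real n"
        unfolding q_def by (metis div_times_less_eq_dividend of_nat_le_iff of_nat_mult)
      have "g n \<le> real q * g k + g (n mod k)"
        using subadditive_mult_add_le[OF subadd, of q k "n mod k"] by (simp add: q_def)
      also have "\<dots> \<le> (real q * real k) * (g k / real k) + M"
        using M[of "n mod k"] k(1) by simp
      also have "\<dots> \<le> real n * (g k / real k) + M"
        using qk nonneg[of k] by (intro add_right_mono mult_right_mono) auto
      finally have "g n / real n \<le> g k / real k + M / real n"
        using elim by (simp add: field_simps)
      then show ?case using elim by simp
    qed
  qed
qed

lemma tendsto_over_n_bounded_perturbation: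
  fixes f g :: "nat \<Rightarrow> real"
  assumes "(\<lambda>n. f n / real n) \<longlonglongrightarrow> L" and "\<And>n. \<bar>g n - f n\<bar> \<le> B"
  shows "(\<lambda>n. g n / real n) \<longlonglongrightarrow> L"
proof -
  have "(\<lambda>n. (g n - f n) / real n) \<longlonglongrightarrow> 0"
    by (rule Lim_null_comparison[OF _ lim_const_over_n[of B]])
       (auto intro!: always_eventually divide_right_mono assms(2))
  from tendsto_add[OF this assms(1)] show ?thesis
    by (simp add: diff_divide_distrib)
qed

lemma tendsto_nat_floor_mult_over_n:
  fixes r :: real
  assumes "r \<ge> 0"
  shows "(\<lambda>n. real (nat \<lfloor>r * real n\<rfloor>) / real n) \<longlonglongrightarrow> r"
proof (rule tendsto_sandwich)
  have "(\<lambda>n. r - 1 / real n) \<longlonglongrightarrow> r - 0" by (intro tendsto_intros)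
  then show "(\<lambda>n. r - 1 / real n) \<longlonglongrightarrow> r" by simp
  show "\<forall>\<^sub>F n in sequentially. r - 1 / real n \<le> real (nat \<lfloor>r * real n\<rfloor>) / real n"
    using eventually_ge_at_top[of 1]
  proof eventually_elim
    case (elim n)
    have "r - 1 / real n = (r * real n - 1) / real n" using elim by (simp add: field_simps)
    also have "\<dots> \<le> real (nat \<lfloor>r * real n\<rfloor>) / real n"
      using assms real_of_int_floor_gt_diff_one[of "r * real n"] by (intro divide_right_mono) auto
    finally show ?case .
  qed
  show "\<forall>\<^sub>F n in sequentially. real (nat \<lfloor>r * real n\<rfloor>) / real n \<le> r"
    using eventually_ge_at_top[of 1]
  proof eventually_elim
    case (elim n)
    have "real (nat \<lfloor>r * real n\<rfloor>) \<le> r * real n" using assms by simp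
    then show ?case using elim by (simp add: field_simps)
  qed
qed simp

lemma tendsto_over_n_floor_rescaled:
  fixes f :: "nat \<Rightarrow> real"
  assumes lim: "(\<lambda>n. f n / real n) \<longlonglongrightarrow> L" and "r > 0"
  shows "(\<lambda>n. f (nat \<lfloor>r * real n\<rfloor>) / real n) \<longlonglongrightarrow> r * L"
proof -
  define m where "m n = nat \<lfloor>r * real n\<rfloor>" for n
  have m: "filterlim m sequentially sequentially"
    unfolding m_def using \<open>r > 0\<close>
    by (intro filterlim_compose[OF filterlim_nat_sequentially]
          filterlim_compose[OF filterlim_floor_sequentially]
          filterlim_tendsto_pos_mult_at_top[OF tendsto_const _ filterlim_real_sequentially])
  have "(\<lambda>n. f (m n) / real (m n) * (real (m n) / real n)) \<longlonglongrightarrow> L * r"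
    using filterlim_compose[OF lim m] tendsto_nat_floor_mult_over_n[of r] \<open>r > 0\<close>
    by (intro tendsto_mult) (auto simp: m_def o_def)
  moreover have "\<forall>\<^sub>F n in sequentially. f (m n) / real (m n) * (real (m n) / real n) = f (m n) / real n"
    using filterlim_at_top[THEN iffD1, OF m, rule_format, of 1]
    by (auto elim!: eventually_mono)
  ultimately show ?thesis
    unfolding m_def by (simp add: mult.commute Lim_transform_eventually)
qed

locale coarsely_invariant_metric_vector_space =
  fixes sm :: "'k::{real_normed_div_algebra,euclidean_space} \<Rightarrow> 'e::ab_group_add \<Rightarrow> 'e"
    and d :: "'e \<Rightarrow> 'e \<Rightarrow> real"
    and \<mu> :: "'k measure"
    and C0 C1 C2 C3 :: real
  assumes metric_vector_space: "metric_vector_space sm d"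
    and translation_invariant: "translation_invariant C0 d"
    and lipschitz_multiplicative: "lipschitz_multiplicative C1 C2 C3 sm d"
    and right_haar_prob: "right_haar_prob \<mu>"
begin

abbreviation N0 :: "'e \<Rightarrow> real" where "N0 x \<equiv> d0 \<mu> sm d x 0"
abbreviation N :: "'e \<Rightarrow> real" where "N x \<equiv> delta0 \<mu> sm d x 0"

lemma K_vector_space: "K_vector_space sm"
  using metric_vector_space by (simp add: metric_vector_space_def)

lemma sm_add_right: "sm a (x + y) = sm a x + sm a y"
  and sm_add_left: "sm (a + b) x = sm a x + sm b x"
  and sm_sm: "sm a (sm b x) = sm (a * b) x"
  and sm_one: "sm 1 x = x"
  using K_vector_space by (simp_all add: K_vector_space_def)

lemma sm_zero_left: "sm 0 x = 0"
  using sm_add_left[of 0 0 x] by simp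

lemma sm_zero_right: "sm a 0 = 0"
  using sm_add_right[of a 0 0] by simp

lemma sm_minus_one: "sm (-1) x = - x"
  using sm_add_left[of 1 "-1" x] by (simp add: sm_one sm_zero_left eq_neg_iff_add_eq_0 add.commute)

lemma Metric_space: "Metric_space UNIV d"
  using metric_vector_space by (simp add: metric_vector_space_def)

lemma d_nonneg: "d x y \<ge> 0"
  and d_self: "d x x = 0"
  and d_triangle: "d x z \<le> d x y + d y z"
  using Metric_space by (simp_all add: Metric_space_def)

lemma d_translate_le: "d (x + z) (y + z) \<le> d x y + C0"
  using translation_invariant by (simp add: translation_invariant_def)

lemma C0_nonneg: "C0 \<ge> 0"
  using d_translate_le[of 0 0 0] by (simp add: d_self)

lemma C1_ge_1: "C1 \<ge> 1" and C2_nonneg: "C2 \<ge> 0"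
  using lipschitz_multiplicative by (simp_all add: lipschitz_multiplicative_def)

lemma d_scale_le: "d (sm c x) (sm c y) \<le> C1 * norm c * d x y + C2 * norm c + C3"
  using lipschitz_multiplicative by (simp add: lipschitz_multiplicative_def)

lemma prob_space: "prob_space \<mu>"
  and sets_\<mu>: "sets \<mu> = sets (restrict_space borel unitK)"
  and measure_mult_right_unit: "A \<in> sets \<mu> \<Longrightarrow> v \<in> unitK \<Longrightarrow> measure \<mu> ((\<lambda>u. u * v) ` A) = measure \<mu> A"
  using right_haar_prob by (simp_all add: right_haar_prob_def)

lemma space_\<mu>: "space \<mu> = unitK"
  using sets_eq_imp_space_eq[OF sets_\<mu>] by (simp add: space_restrict_space)

lemma continuous_dist_scaled: "continuous_on UNIV (\<lambda>u. d (sm u x) 0)"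
proof -
  let ?T = "Metric_space.mtopology UNIV d"
  have scalar: "continuous_map (prod_topology euclidean ?T) ?T (\<lambda>(a, x). sm a x)"
    using metric_vector_space by (simp add: metric_vector_space_def)
  have pair: "continuous_map euclidean (prod_topology euclidean ?T) (\<lambda>u. (u, x))"
    by (intro continuous_map_pairedI) (auto simp: Metric_space.topspace_mtopology[OF Metric_space])
  have "continuous_map euclidean ?T (\<lambda>u. sm u x)"
    using continuous_map_compose[OF pair scalar] by (simp add: o_def)
  then have "continuous_map euclidean euclidean (\<lambda>u. mdist (metric (UNIV, d)) (sm u x) 0)"
    by (intro continuous_map_mdist)
       (auto simp: Metric_space.mtopology_of[OF Metric_space] Metric_space.topspace_mtopology[OF Metric_space])
  then show ?thesis
    by (simp add: Metric_space.mdist_metric[OF Metric_space])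
qed


lemma N0_eq_integral: "N0 x = (\<integral>u. d (sm u x) 0 \<partial>\<mu>)"
  by (simp add: d0_def sm_zero_right)

lemma measurable_dist_scaled: "(\<lambda>u. d (sm u x) 0) \<in> borel_measurable \<mu>"
  using measurable_restrict_space1[OF borel_measurable_continuous_onI[OF continuous_dist_scaled]]
  by (simp add: measurable_cong_sets[OF sets_\<mu> refl])

lemma dist_scaled_le:
  "u \<in> unitK \<Longrightarrow> d (sm u (sm c x)) 0 \<le> C1 * norm c * d x 0 + C2 * norm c + C3"
  using d_scale_le[of "u * c" x 0] by (simp add: sm_sm sm_zero_right unitK_def norm_mult)

lemma integrable_dist_scaled: "integrable \<mu> (\<lambda>u. d (sm u x) 0)"
proof -
  interpret prob_space \<mu> by (rule prob_space)
  show ?thesis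
    using dist_scaled_le[of _ 1 x]
    by (intro integrable_const_bound[where B = "C1 * d x 0 + C2 + C3"] AE_I2 measurable_dist_scaled)
       (auto simp: space_\<mu> sm_one d_nonneg)
qed

lemma N0_nonneg: "N0 x \<ge> 0"
  unfolding N0_eq_integral by (rule integral_nonneg_AE) (simp add: d_nonneg)

lemma N0_zero: "N0 0 = 0"
  unfolding N0_eq_integral by (simp add: sm_zero_right d_self)

lemma N0_add_le: "N0 (x + y) \<le> N0 x + N0 y + C0"
proof -
  interpret prob_space \<mu> by (rule prob_space)
  have "d (sm u x + sm u y) 0 \<le> d (sm u x) 0 + d (sm u y) 0 + C0" for u
    using d_triangle[of "sm u x + sm u y" 0 "0 + sm u y"] d_translate_le[of "sm u x" "sm u y" 0]
    by simp
  then have "N0 (x + y) \<le> (\<integral>u. d (sm u x) 0 + d (sm u y) 0 + C0 \<partial>\<mu>)"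
    unfolding N0_eq_integral
    by (intro integral_mono integrable_dist_scaled Bochner_Integration.integrable_add
          integrable_const) (simp_all add: sm_add_right)
  also have "\<dots> = N0 x + N0 y + C0"
    unfolding N0_eq_integral using integrable_dist_scaled by (simp add: prob_space)
  finally show ?thesis .
qed

lemma N0_scale_le: "N0 (sm c x) \<le> C1 * norm c * d x 0 + C2 * norm c + C3"
proof -
  interpret prob_space \<mu> by (rule prob_space)
  have "N0 (sm c x) \<le> (\<integral>u. C1 * norm c * d x 0 + C2 * norm c + C3 \<partial>\<mu>)"
    unfolding N0_eq_integral
    by (rule integral_mono) (auto simp: integrable_dist_scaled dist_scaled_le space_\<mu>)
  then show ?thesis by (simp add: prob_space)
qed

lemma N0_scale_close:
  assumes "norm (b - c) \<le> 1"
  shows "\<bar>N0 (sm b x) - N0 (sm c x)\<bar> \<le> C0 + C1 * d x 0 + C2 + C3"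
proof -
  have "N0 (sm a x) \<le> N0 (sm a' x) + (C0 + C1 * d x 0 + C2 + C3)"
    if "norm (a - a') \<le> 1" for a a'
  proof -
    have "norm (a - a') * (C1 * d x 0) \<le> C1 * d x 0" "norm (a - a') * C2 \<le> C2"
      using mult_right_mono[OF that, of "C1 * d x 0"] mult_right_mono[OF that, of C2]
        C1_ge_1 C2_nonneg d_nonneg[of x 0] by auto
    then show ?thesis
      using N0_add_le[of "sm a' x" "sm (a - a') x"] N0_scale_le[of "a - a'" x]
      by (simp add: sm_add_left[symmetric] algebra_simps)
  qed
  from this[of b c] this[of c b] assms show ?thesis
    by (simp add: norm_minus_commute)
qed

lemma measurable_mult_right_unit:
  assumes "v \<in> unitK"
  shows "(\<lambda>w. w * v) \<in> measurable \<mu> \<mu>"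
proof -
  have "(\<lambda>w. w * v) \<in> measurable (restrict_space borel unitK) (restrict_space borel unitK)"
    using assms by (intro measurable_restrict_space3 borel_measurable_continuous_onI)
       (auto intro!: continuous_intros simp: unitK_def norm_mult)
  then show ?thesis
    by (simp add: measurable_cong_sets[OF sets_\<mu> sets_\<mu>])
qed

lemma distr_mult_right_unit:
  assumes v: "v \<in> unitK"
  shows "distr \<mu> \<mu> (\<lambda>w. w * v) = \<mu>"
proof (rule measure_eqI)
  interpret prob_space \<mu> by (rule prob_space)
  fix A assume "A \<in> sets (distr \<mu> \<mu> (\<lambda>w. w * v))"
  then have A: "A \<in> sets \<mu>" by simp
  have v_inv: "inverse v \<in> unitK" "v \<noteq> 0"
    using v by (auto simp: unitK_def norm_inverse)
  have "(\<lambda>w. w * v) -` A \<inter> space \<mu> = (\<lambda>w. w * inverse v) ` A"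
  proof (intro equalityI subsetI)
    fix w assume "w \<in> (\<lambda>w. w * v) -` A \<inter> space \<mu>"
    then show "w \<in> (\<lambda>w. w * inverse v) ` A"
      using v_inv by (auto intro!: image_eqI[of _ _ "w * v"] simp: mult.assoc)
  next
    fix w assume "w \<in> (\<lambda>w. w * inverse v) ` A"
    then obtain a where "a \<in> A" "w = a * inverse v" by blast
    moreover have "a \<in> unitK"
      using sets.sets_into_space[OF A] \<open>a \<in> A\<close> space_\<mu> by auto
    ultimately show "w \<in> (\<lambda>w. w * v) -` A \<inter> space \<mu>"
      using v_inv by (auto simp: mult.assoc space_\<mu> unitK_def norm_mult norm_inverse)
  qed
  then show "emeasure (distr \<mu> \<mu> (\<lambda>w. w * v)) A = emeasure \<mu> A"
    using emeasure_distr[OF measurable_mult_right_unit[OF v] A] measure_mult_right_unit[OF A v_inv(1)]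
    by (simp add: emeasure_eq_measure)
qed simp

lemma N0_scale_unit:
  assumes "v \<in> unitK"
  shows "N0 (sm v x) = N0 x"
proof -
  have "N0 x = (\<integral>w. d (sm w x) 0 \<partial>distr \<mu> \<mu> (\<lambda>w. w * v))"
    unfolding N0_eq_integral distr_mult_right_unit[OF assms] ..
  also have "\<dots> = (\<integral>w. d (sm (w * v) x) 0 \<partial>\<mu>)"
    by (rule integral_distr[OF measurable_mult_right_unit[OF assms] measurable_dist_scaled])
  finally show ?thesis
    by (simp add: N0_eq_integral sm_sm)
qed


lemma tendsto_N: "(\<lambda>n. N0 (sm (of_nat n) x) / real n) \<longlonglongrightarrow> N x"
proof -
  let ?g = "\<lambda>n. N0 (sm (of_nat n) x) + C0"
  have "(\<lambda>n. ?g n / real n) \<longlonglongrightarrow> (INF n\<in>{1..}. ?g n / real n)"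
  proof (rule fekete_subadditive)
    show "?g (m + n) \<le> ?g m + ?g n" for m n
      using N0_add_le[of "sm (of_nat m) x" "sm (of_nat n) x"] C0_nonneg
      by (simp add: sm_add_left[symmetric])
    show "?g n \<ge> 0" for n
      using N0_nonneg C0_nonneg by (simp add: add_nonneg_nonneg)
  qed
  then have "(\<lambda>n. N0 (sm (of_nat n) x) / real n) \<longlonglongrightarrow> (INF n\<in>{1..}. ?g n / real n)"
    by (rule tendsto_over_n_bounded_perturbation[where B = C0]) (simp add: C0_nonneg)
  then show ?thesis
    by (simp add: delta0_def sm_zero_right limI)
qed

lemma N_nonneg: "N x \<ge> 0"
  by (rule LIMSEQ_le_const[OF tendsto_N]) (intro exI allI impI divide_nonneg_nonneg N0_nonneg, simp)

lemma N_zero: "N 0 = 0"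
proof -
  have "(\<lambda>n. N0 (sm (of_nat n) 0) / real n) \<longlonglongrightarrow> 0"
    by (simp add: sm_zero_right N0_zero)
  then show ?thesis
    using LIMSEQ_unique[OF tendsto_N] by blast
qed

lemma N_add_le: "N (x + y) \<le> N x + N y"
proof (rule LIMSEQ_le[OF tendsto_N])
  show "(\<lambda>n. N0 (sm (of_nat n) x) / real n + N0 (sm (of_nat n) y) / real n + C0 / real n)
      \<longlonglongrightarrow> N x + N y"
    using tendsto_add[OF tendsto_add[OF tendsto_N tendsto_N] lim_const_over_n[of C0]] by simp
  show "\<exists>k. \<forall>n\<ge>k. N0 (sm (of_nat n) (x + y)) / real n
      \<le> N0 (sm (of_nat n) x) / real n + N0 (sm (of_nat n) y) / real n + C0 / real n"
    using N0_add_le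
    by (auto simp: sm_add_right add_divide_distrib[symmetric] intro!: divide_right_mono)
qed

lemma N_scale: "N (sm a x) = norm a * N x"
proof (cases "a = 0")
  case True
  then show ?thesis by (simp add: sm_zero_left N_zero)
next
  case False
  define r where "r = norm a"
  define u where "u = a * inverse (of_real r)"
  define m where "m n = nat \<lfloor>r * real n\<rfloor>" for n
  have r: "r > 0" using False by (simp add: r_def)
  have u: "u \<in> unitK" "a = u * of_real r"
    using r by (auto simp: u_def r_def unitK_def norm_mult norm_inverse mult.assoc)
  have close: "norm (of_nat n * a - u * of_nat (m n)) \<le> 1" for n
  proof -
    have "of_nat n * a = u * of_real (real n * r)"
      by (simp add: u(2) mult_of_nat_commute mult.assoc flip: mult.assoc[of "of_nat n"])
    then have "of_nat n * a - u * of_nat (m n) = u * of_real (r * real n - real (m n))"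
      by (simp add: right_diff_distrib mult.commute[of r])
    moreover have "r * real n - 1 \<le> real (m n)" "real (m n) \<le> r * real n"
      using r real_of_int_floor_gt_diff_one[of "r * real n"] by (auto simp: m_def)
    ultimately show ?thesis
      using u(1) by (simp only: norm_mult norm_of_real) (simp add: unitK_def)
  qed
  have "\<bar>N0 (sm (of_nat n) (sm a x)) - N0 (sm (of_nat (m n)) x)\<bar> \<le> C0 + C1 * d x 0 + C2 + C3" for n
    using N0_scale_close[OF close[of n], of x] N0_scale_unit[OF u(1), of "sm (of_nat (m n)) x"]
    by (simp add: sm_sm)
  moreover have "(\<lambda>n. N0 (sm (of_nat (m n)) x) / real n) \<longlonglongrightarrow> r * N x"
    unfolding m_def by (rule tendsto_over_n_floor_rescaled[OF tendsto_N r])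
  ultimately have "(\<lambda>n. N0 (sm (of_nat n) (sm a x)) / real n) \<longlonglongrightarrow> r * N x"
    by (rule tendsto_over_n_bounded_perturbation[rotated])
  then show ?thesis
    using LIMSEQ_unique[OF tendsto_N] r_def by blast
qed

lemma N_uminus: "N (- x) = N x"
  using N_scale[of "-1" x] by (simp add: sm_minus_one)

lemma N_eq_0_iff: "N x = 0 \<longleftrightarrow> x \<in> E0 \<mu> sm d"
  by (simp add: E0_def)

lemma zero_in_E0: "0 \<in> E0 \<mu> sm d"
  by (simp add: E0_def N_zero)

lemma add_in_E0: "x \<in> E0 \<mu> sm d \<Longrightarrow> y \<in> E0 \<mu> sm d \<Longrightarrow> x + y \<in> E0 \<mu> sm d"
  using N_add_le[of x y] N_nonneg[of "x + y"] by (simp add: E0_def)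

lemma sm_in_E0: "x \<in> E0 \<mu> sm d \<Longrightarrow> sm a x \<in> E0 \<mu> sm d"
  by (simp add: E0_def N_scale)

lemma N_eq_if_diff_in_E0:
  assumes "x - y \<in> E0 \<mu> sm d"
  shows "N x = N y"
  using N_add_le[of y "x - y"] N_add_le[of x "y - x"] N_uminus[of "x - y"] assms
  by (simp add: E0_def)

end

theorem proposition6:
  fixes sm :: "'k::{real_normed_div_algebra,euclidean_space} \<Rightarrow> 'e::ab_group_add \<Rightarrow> 'e"
    and d :: "'e \<Rightarrow> 'e \<Rightarrow> real"
    and \<mu> :: "'k measure"
    and C0 C1 C2 C3 :: real
  assumes "metric_vector_space sm d"
    and "translation_invariant C0 d"
    and "lipschitz_multiplicative C1 C2 C3 sm d"
    and "right_haar_prob \<mu>"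
  shows "(0 \<in> E0 \<mu> sm d \<and> (\<forall>x\<in>E0 \<mu> sm d. \<forall>y\<in>E0 \<mu> sm d. x + y \<in> E0 \<mu> sm d)
         \<and> (\<forall>a. \<forall>x\<in>E0 \<mu> sm d. sm a x \<in> E0 \<mu> sm d))
    \<and> (\<forall>x y. x - y \<in> E0 \<mu> sm d \<longrightarrow> delta0 \<mu> sm d x 0 = delta0 \<mu> sm d y 0)
    \<and> (\<forall>x. delta0 \<mu> sm d x 0 \<ge> 0)
    \<and> (\<forall>x. delta0 \<mu> sm d x 0 = 0 \<longleftrightarrow> x \<in> E0 \<mu> sm d)
    \<and> (\<forall>a x. delta0 \<mu> sm d (sm a x) 0 = norm a * delta0 \<mu> sm d x 0)
    \<and> (\<forall>x y. delta0 \<mu> sm d (x + y) 0 \<le> delta0 \<mu> sm d x 0 + delta0 \<mu> sm d y 0)"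
proof -
  interpret coarsely_invariant_metric_vector_space sm d \<mu> C0 C1 C2 C3
    using assms by unfold_locales
  show ?thesis
    by (intro conjI allI ballI impI zero_in_E0 add_in_E0 sm_in_E0 N_eq_if_diff_in_E0
        N_nonneg N_eq_0_iff N_scale N_add_le)
qed

end
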